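(* Let $(\mathbf{a}_1,\mathbf{a}_2,\mathbf{a}_3)$ be a weakly generic triple, fix $j\in\{0,\dots,f-1\}$, and let $s\in S_3$ be the permutation with $a_{s(1),f-j-1}>a_{s(2),f-j-1}>a_{s(3),f-j-1}$. Let $R$ be an $\mathcal{O}$-algebra and $I\in\mathcal{I}(R)$. Then $$\mathrm{Ad}\big(v^{a_{s(1),f-j-1}},v^{a_{s(2),f-j-1}},v^{a_{s(3),f-j-1}}\big)\big(\varphi(I)^{-1}\big)\in\mathcal{D}_3(R).$$
   Context: $p>3$ prime, $\mathcal{O}$ the ring of integers of a finite extension of $\mathbb{Q}_p$. $\mathbf{a}_k=(a_{k,j})_{j=0}^{f-1}$ ($k=1,2,3$) are $f$-tuples of integers in $[0,p-1]$; the triple is weakly generic if $3\le|a_{1,j}-a_{2,j}|,|a_{2,j}-a_{3,j}|,|a_{1,j}-a_{3,j}|\le p-4$ for all $j$. $\mathcal{I}(R)$ is the set of $M\in\mathrm{GL}_3(R[[v]])$ that are upper triangular modulo $v$; $\mathcal{D}_3(R)$ is the set of $M\in\mathrm{GL}_3(R[[v]])$ that are diagonal modulo $v^3$. $\varphi$ is applied entrywise, where $\varphi:R[[v]]\to R[[v]]$ is the $R$-linear ring endomorphism with $v\mapsto v^p$. $\mathrm{Ad}(v^{b_1},v^{b_2},v^{b_3})(M)=\mathrm{diag}(v^{b_1},v^{b_2},v^{b_3})M\,\mathrm{diag}(v^{-b_1},v^{-b_2},v^{-b_3})$. *)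

theory Defs
  imports "HOL-Analysis.Analysis" "HOL-Computational_Algebra.Formal_Laurent_Series"
          "HOL-Library.Numeral_Type"
begin

type_synonym 'a mat3 = "('a fps, 3) vec ^ 3"

text \<open>3x3 matrices over R[[v]] are modelled as ('r fps)^3^3, indices 0 < 1 < 2 of type 3
  standing for 1, 2, 3.\<close>

definition weakly_generic :: "nat \<Rightarrow> nat \<Rightarrow> (nat \<Rightarrow> nat \<Rightarrow> nat) \<Rightarrow> bool" where
  "weakly_generic p f a \<longleftrightarrow>
     (\<forall>k\<in>{1,2,3}. \<forall>j<f. a k j \<le> p - 1) \<and>
     (\<forall>j<f. \<forall>k\<in>{1,2,3}. \<forall>l\<in>{1,2,3}. k \<noteq> l \<longrightarrow>
        3 \<le> \<bar>int (a k j) - int (a l j)\<bar> \<and> \<bar>int (a k j) - int (a l j)\<bar> \<le> int p - 4)"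

definition fps_frob :: "nat \<Rightarrow> 'a::comm_ring_1 fps \<Rightarrow> 'a fps" where
  "fps_frob p g = Abs_fps (\<lambda>n. if p dvd n then fps_nth g (n div p) else 0)"

definition mat_frob :: "nat \<Rightarrow> 'a::comm_ring_1 mat3 \<Rightarrow> 'a mat3" where
  "mat_frob p M = (\<chi> i k. fps_frob p (M $ i $ k))"

definition iwahori :: "('a::comm_ring_1 mat3) set" where
  "iwahori = {M. invertible M \<and> (\<forall>i k. k < i \<longrightarrow> fps_nth (M $ i $ k) 0 = 0)}"

definition D3 :: "('a::comm_ring_1 mat3) set" where
  "D3 = {M. invertible M \<and> (\<forall>i k. i \<noteq> k \<longrightarrow> (\<forall>n<3. fps_nth (M $ i $ k) n = 0))}"

definition Ad_v :: "(3 \<Rightarrow> int) \<Rightarrow> 'a::comm_ring_1 mat3 \<Rightarrow> ('a fls, 3) vec ^ 3" where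
  "Ad_v b M = (\<chi> i k. fls_X_intpow (b i - b k) * fps_to_fls (M $ i $ k))"

definition mat_to_fls :: "'a::comm_ring_1 mat3 \<Rightarrow> ('a fls, 3) vec ^ 3" where
  "mat_to_fls M = (\<chi> i k. fps_to_fls (M $ i $ k))"

definition idx3 :: "3 \<Rightarrow> nat" where
  "idx3 i = (if i = 0 then 1 else if i = 1 then 2 else 3)"

end

theory Submission
  imports Defs
begin

text \<open>
  Since \<phi> is a ring endomorphism, \<phi>(I)^-1 = \<phi>(J) with J = I^-1, and J is again upper
  triangular modulo v. The (i,k) entry of Ad(v^b)(\<phi>(J)) is v^(b_i - b_k) J_ik(v^p), whose
  exponents are b_i - b_k plus multiples of p. Above the diagonal b_i - b_k \<ge> 3; below it
  b_i - b_k \<ge> 4 - p while the constant term of J_ik vanishes, so every exponent is at least 4.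
  Hence Ad(v^b)(\<phi>(J)) is integral and diagonal modulo v^3; it is invertible over R[[v]] because
  its inverse Ad(v^b)(\<phi>(I)) is integral as well.
\<close>

lemma less_3_iff: "(k::3) < i \<longleftrightarrow> (k = 0 \<and> i = 1) \<or> (k = 0 \<and> i = 2) \<or> (k = 1 \<and> i = 2)"
  using exhaust_3[of i] exhaust_3[of k]
  by (auto simp: less_bit1_def bit1.Rep_0 bit1.Rep_1 bit1.Rep_numeral)

lemma sum_UNIV_3: "sum g (UNIV::3 set) = g 0 + g 1 + g 2"
proof -
  have "sum g (UNIV::3 set) = g 1 + g 2 + g 3" by (rule sum_3)
  also have "(3::3) = 0" by simp
  finally show ?thesis by (simp add: ac_simps)
qed

lemma matrix_mult_3_nth:
  fixes A B :: "'a::semiring_1^3^3"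
  shows "(A ** B) $ i $ k = A$i$0 * B$0$k + A$i$1 * B$1$k + A$i$2 * B$2$k"
  by (simp add: matrix_matrix_mult_def sum_UNIV_3)

lemma matrix_inv_unique:
  fixes A B :: "'a::semiring_1^'n^'n"
  assumes "A ** B = mat 1" "B ** A = mat 1"
  shows "matrix_inv A = B"
proof -
  have "A ** matrix_inv A = mat 1 \<and> matrix_inv A ** A = mat 1"
    unfolding matrix_inv_def by (rule someI[of _ B]) (use assms in blast)
  then have "B = B ** (A ** matrix_inv A)" by simp
  also have "\<dots> = matrix_inv A" by (simp add: matrix_mul_assoc assms)
  finally show ?thesis by simp
qed

lemma upper_triangular_inverse_3:
  fixes U W :: "'a::comm_ring_1^3^3"
  assumes UW: "U ** W = mat 1" and WU: "W ** U = mat 1"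
    and U: "\<forall>i k. k < i \<longrightarrow> U$i$k = 0"
  shows "\<forall>i k. k < i \<longrightarrow> W$i$k = 0"
proof -
  have ne: "(1::3) \<noteq> 0" "(2::3) \<noteq> 0" "(2::3) \<noteq> 1" using less_3_iff by auto
  have U0: "U$1$0 = 0" "U$2$0 = 0" "U$2$1 = 0" using U less_3_iff by auto
  have cancel: "x = 0" if "x * u = 0" "w * u = 1" for x u w :: 'a
    by (metis that mult.assoc mult.commute mult_1_right mult_zero_left)
  have "W$0$0 * U$0$0 = 1" "W$1$0 * U$0$0 = 0" "W$2$0 * U$0$0 = 0"
    using arg_cong[OF WU, of "\<lambda>M :: 'a^3^3. M$0$0"] arg_cong[OF WU, of "\<lambda>M :: 'a^3^3. M$1$0"]
      arg_cong[OF WU, of "\<lambda>M :: 'a^3^3. M$2$0"] U0 ne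
    by (simp_all add: matrix_mult_3_nth mat_def)
  then have W0: "W$1$0 = 0" "W$2$0 = 0" using cancel by blast+
  have "W$2$1 * U$2$2 = 0" "W$2$2 * U$2$2 = 1"
    using arg_cong[OF UW, of "\<lambda>M :: 'a^3^3. M$2$1"] arg_cong[OF UW, of "\<lambda>M :: 'a^3^3. M$2$2"] U0 ne
    by (simp_all add: matrix_mult_3_nth mat_def mult.commute)
  then have "W$2$1 = 0" using cancel by blast
  with W0 show ?thesis using less_3_iff by auto
qed

lemma fps_frob_nth: "fps_frob p g $ n = (if p dvd n then g $ (n div p) else 0)"
  by (simp add: fps_frob_def)

lemma fps_frob_add: "fps_frob p (g + h) = fps_frob p g + fps_frob p h"
  by (simp add: fps_eq_iff fps_frob_nth)

lemma fps_frob_zero [simp]: "fps_frob p 0 = 0"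
  by (simp add: fps_eq_iff fps_frob_nth)

lemma fps_frob_one: "p > 0 \<Longrightarrow> fps_frob p 1 = 1"
  by (auto simp add: fps_eq_iff fps_frob_nth elim!: dvdE)

lemma fps_frob_sum: "fps_frob p (sum g S) = (\<Sum>i\<in>S. fps_frob p (g i))"
  by (induct S rule: infinite_finite_induct) (simp_all add: fps_frob_add)

lemma fps_frob_mult:
  assumes p: "p > 0"
  shows "fps_frob p (g * h) = fps_frob p g * fps_frob p h"
proof (rule fps_ext)
  fix n
  define c where "c i = fps_frob p g $ i * fps_frob p h $ (n - i)" for i
  have c: "c i = (if p dvd i \<and> p dvd n then g $ (i div p) * h $ ((n - i) div p) else 0)"
    if "i \<le> n" for i
    using that by (auto simp: c_def fps_frob_nth dvd_diff_nat dest: dvd_add[of p i "n - i"])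
  have coeff_n: "(fps_frob p g * fps_frob p h) $ n = sum c {0..n}"
    by (simp add: fps_mult_nth c_def)
  show "fps_frob p (g * h) $ n = (fps_frob p g * fps_frob p h) $ n"
  proof (cases "p dvd n")
    case False
    then show ?thesis by (simp add: coeff_n c fps_frob_nth)
  next
    case True
    then obtain m where n: "n = p * m" by (auto elim: dvdE)
    have "(fps_frob p g * fps_frob p h) $ n = sum c {0..n}" by (fact coeff_n)
    also have "\<dots> = sum c ((*) p ` {0..m})"
    proof (rule sum.mono_neutral_right)
      show "\<forall>i\<in>{0..n} - (*) p ` {0..m}. c i = 0"
        using n p by (auto simp: c elim!: dvdE)
    qed (use n in auto)
    also have "\<dots> = (\<Sum>k=0..m. g $ k * h $ (m - k))"
      using p by (simp add: sum.reindex inj_on_def c n flip: diff_mult_distrib2)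
    also have "\<dots> = fps_frob p (g * h) $ n"
      using n p by (simp add: fps_frob_nth fps_mult_nth)
    finally show ?thesis by simp
  qed
qed

lemma mat_frob_mult: "p > 0 \<Longrightarrow> mat_frob p (A ** B) = mat_frob p A ** mat_frob p B"
  by (simp add: mat_frob_def matrix_matrix_mult_def vec_eq_iff fps_frob_sum fps_frob_mult)

lemma mat_frob_one: "p > 0 \<Longrightarrow> mat_frob p (mat 1) = (mat 1 :: 'a::comm_ring_1 mat3)"
  by (simp add: mat_frob_def mat_def vec_eq_iff fps_frob_one)

definition const_coeff_mat :: "'a::comm_ring_1 mat3 \<Rightarrow> 'a^3^3" where
  "const_coeff_mat A = (\<chi> i k. A $ i $ k $ 0)"

lemma const_coeff_mat_mult: "const_coeff_mat (A ** B) = const_coeff_mat A ** const_coeff_mat B"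
  by (simp add: const_coeff_mat_def matrix_matrix_mult_def vec_eq_iff fps_sum_nth)

lemma const_coeff_mat_one: "const_coeff_mat (mat 1) = mat 1"
  by (simp add: const_coeff_mat_def mat_def vec_eq_iff)

lemma iwahori_inverse:
  fixes I J :: "'a::comm_ring_1 mat3"
  assumes "I \<in> iwahori" and IJ: "I ** J = mat 1" and JI: "J ** I = mat 1"
  shows "J \<in> iwahori"
proof -
  have "\<forall>i k. k < i \<longrightarrow> const_coeff_mat J $ i $ k = 0"
  proof (rule upper_triangular_inverse_3)
    show "const_coeff_mat I ** const_coeff_mat J = mat 1"
      "const_coeff_mat J ** const_coeff_mat I = mat 1"
      using IJ JI by (simp_all flip: const_coeff_mat_mult add: const_coeff_mat_one)
    show "\<forall>i k. k < i \<longrightarrow> const_coeff_mat I $ i $ k = 0"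
      using \<open>I \<in> iwahori\<close> by (simp add: iwahori_def const_coeff_mat_def)
  qed
  moreover have "invertible J" using IJ JI unfolding invertible_def by blast
  ultimately show ?thesis by (simp add: iwahori_def const_coeff_mat_def)
qed

lemma fps_to_fls_sum: "fps_to_fls (sum g S) = (\<Sum>i\<in>S. fps_to_fls (g i))"
  by (induct S rule: infinite_finite_induct) simp_all

lemma mat_to_fls_mult: "mat_to_fls (A ** B) = mat_to_fls A ** mat_to_fls B"
  by (simp add: mat_to_fls_def matrix_matrix_mult_def vec_eq_iff fps_to_fls_sum fls_times_fps_to_fls)

lemma mat_to_fls_one: "mat_to_fls (mat 1) = (mat 1 :: ('a::comm_ring_1 fls, 3) vec ^ 3)"
  by (simp add: mat_to_fls_def mat_def vec_eq_iff)

lemma mat_to_fls_inject: "mat_to_fls A = mat_to_fls B \<longleftrightarrow> A = B"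
  by (simp add: mat_to_fls_def vec_eq_iff)

lemma mat_to_fls_regpart:
  fixes X :: "('a::comm_ring_1 fls, 3) vec ^ 3"
  assumes "\<forall>i k m. m < 0 \<longrightarrow> fls_nth (X $ i $ k) m = 0"
  shows "mat_to_fls (\<chi> i k. fls_regpart (X $ i $ k)) = X"
  using assms by (simp add: mat_to_fls_def vec_eq_iff fls_eq_iff)

lemma invertible_if_mat_to_fls_inverse:
  assumes "mat_to_fls M ** mat_to_fls N = mat 1" "mat_to_fls N ** mat_to_fls M = mat 1"
  shows "invertible M"
proof -
  have "M ** N = mat 1" "N ** M = mat 1"
    using assms by (simp_all flip: mat_to_fls_inject mat_to_fls_mult add: mat_to_fls_one)
  then show ?thesis unfolding invertible_def by blast
qed

lemma Ad_v_mult: "Ad_v b (A ** B) = Ad_v b A ** Ad_v b B"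
proof -
  have "fls_X_intpow (b i - b k) * fps_to_fls (A$i$j * B$j$k)
      = fls_X_intpow (b i - b j) * fps_to_fls (A$i$j) * (fls_X_intpow (b j - b k) * fps_to_fls (B$j$k))"
    for i j k
  proof -
    have "fls_X_intpow (b i - b k) = (fls_X_intpow (b i - b j) * fls_X_intpow (b j - b k) :: 'a fls)"
      unfolding fls_X_intpow_times_fls_X_intpow by simp
    then show ?thesis by (simp add: fls_times_fps_to_fls ac_simps)
  qed
  then show ?thesis
    by (simp add: Ad_v_def matrix_matrix_mult_def vec_eq_iff fps_to_fls_sum sum_distrib_left)
qed

lemma Ad_v_one: "Ad_v b (mat 1) = (mat 1 :: ('a::comm_ring_1 fls, 3) vec ^ 3)"
  by (simp add: Ad_v_def mat_def vec_eq_iff)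

lemma Ad_v_nth:
  "fls_nth (Ad_v b M $ i $ k) m =
     (if m < b i - b k then 0 else M $ i $ k $ nat (m - (b i - b k)))"
  by (simp only: Ad_v_def vec_lambda_beta fls_X_intpow_times_conv_shift) (simp add: algebra_simps)

lemma Ad_v_mat_frob_nth_eq_0:
  fixes A :: "'a::comm_ring_1 mat3"
  assumes "A \<in> iwahori" and "p > 0"
    and gaps: "\<forall>i k. i < k \<longrightarrow> 3 \<le> b i - b k \<and> b i - b k \<le> int p - 4"
    and "m < 0 \<or> (m < 3 \<and> i \<noteq> k)"
  shows "fls_nth (Ad_v b (mat_frob p A) $ i $ k) m = 0"
proof (cases "m < b i - b k")
  case False
  define n where "n = nat (m - (b i - b k))"
  have "k < i"
  proof (rule ccontr)
    assume "\<not> k < i"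
    then have "i = k \<or> i < k" by auto
    then show False using False assms(4) gaps[rule_format, of i k] by auto
  qed
  then have "m - (b i - b k) < int p"
    using assms(4) gaps[rule_format, of k i] by auto
  then have "n < p" using False by (simp add: n_def)
  have "A $ i $ k $ 0 = 0" using \<open>k < i\<close> \<open>A \<in> iwahori\<close> by (simp add: iwahori_def)
  with \<open>n < p\<close> have "fps_frob p (A $ i $ k) $ n = 0"
    by (auto simp: fps_frob_nth elim!: dvdE)
  then show ?thesis using False by (simp add: Ad_v_nth mat_frob_def n_def)
qed (simp add: Ad_v_nth)

lemma Ad_v_inverse_mat_frob_in_D3:
  fixes I :: "'a::comm_ring_1 mat3"
  assumes "I \<in> iwahori" and p: "p > 0"
    and gaps: "\<forall>i k. i < k \<longrightarrow> 3 \<le> b i - b k \<and> b i - b k \<le> int p - 4"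
  shows "\<exists>N \<in> D3. mat_to_fls N = Ad_v b (matrix_inv (mat_frob p I))"
proof -
  obtain J where IJ: "I ** J = mat 1" and JI: "J ** I = mat 1"
    using \<open>I \<in> iwahori\<close> unfolding iwahori_def invertible_def by blast
  have "J \<in> iwahori" using iwahori_inverse[OF \<open>I \<in> iwahori\<close> IJ JI] .
  have inv: "matrix_inv (mat_frob p I) = mat_frob p J"
    by (rule matrix_inv_unique) (simp_all add: IJ JI p flip: mat_frob_mult add: mat_frob_one)
  define N where "N = (\<chi> i k. fls_regpart (Ad_v b (mat_frob p J) $ i $ k))"
  define N' where "N' = (\<chi> i k. fls_regpart (Ad_v b (mat_frob p I) $ i $ k))"
  have N: "mat_to_fls N = Ad_v b (mat_frob p J)"
    unfolding N_def
    by (rule mat_to_fls_regpart) (simp add: Ad_v_mat_frob_nth_eq_0[OF \<open>J \<in> iwahori\<close> p gaps])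
  have N': "mat_to_fls N' = Ad_v b (mat_frob p I)"
    unfolding N'_def
    by (rule mat_to_fls_regpart) (simp add: Ad_v_mat_frob_nth_eq_0[OF \<open>I \<in> iwahori\<close> p gaps])
  have "invertible N"
    by (rule invertible_if_mat_to_fls_inverse[of _ N'])
      (simp_all add: N N' IJ JI p Ad_v_one mat_frob_one flip: Ad_v_mult mat_frob_mult)
  moreover have "\<forall>i k. i \<noteq> k \<longrightarrow> (\<forall>n<3. N $ i $ k $ n = 0)"
    unfolding N_def by (simp add: Ad_v_mat_frob_nth_eq_0[OF \<open>J \<in> iwahori\<close> p gaps])
  ultimately show ?thesis using N inv unfolding D3_def by auto
qed

lemma weakly_generic_gap:
  assumes "weakly_generic p f a" and "c < f"
    and "k \<in> {1,2,3}" "l \<in> {1,2,3}" and "a l c < a k c"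
  shows "3 \<le> int (a k c) - int (a l c) \<and> int (a k c) - int (a l c) \<le> int p - 4"
  using assms unfolding weakly_generic_def by (metis abs_of_nonneg less_irrefl of_nat_less_iff
      diff_ge_0_iff_ge less_imp_le)

theorem proposition2p16:
  fixes p f j :: nat and a :: "nat \<Rightarrow> nat \<Rightarrow> nat" and s :: "nat \<Rightarrow> nat"
    and I :: "'r::comm_ring_1 mat3"
  assumes "prime p" and "p > 3"
    and "weakly_generic p f a"
    and "j < f"
    and "s permutes {1,2,3}"
    and "a (s 1) (f - j - 1) > a (s 2) (f - j - 1)"
    and "a (s 2) (f - j - 1) > a (s 3) (f - j - 1)"
    and "I \<in> iwahori"
  shows "\<exists>N \<in> D3. mat_to_fls N =
           Ad_v (\<lambda>i. int (a (s (idx3 i)) (f - j - 1))) (matrix_inv (mat_frob p I))"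
proof (rule Ad_v_inverse_mat_frob_in_D3)
  let ?b = "\<lambda>i. int (a (s (idx3 i)) (f - j - 1))"
  have s: "s 1 \<in> {1,2,3}" "s 2 \<in> {1,2,3}" "s 3 \<in> {1,2,3}"
    using permutes_in_image[OF assms(5)] by auto
  have "f - j - 1 < f" using assms(4) by simp
  note gap = weakly_generic_gap[OF assms(3) this]
  have "(1::3) \<noteq> 0" "(2::3) \<noteq> 0" "(2::3) \<noteq> 1" using less_3_iff by auto
  then have "?b 0 = a (s 1) (f - j - 1)" "?b 1 = a (s 2) (f - j - 1)" "?b 2 = a (s 3) (f - j - 1)"
    by (simp_all add: idx3_def)
  then show "\<forall>i k. i < k \<longrightarrow> 3 \<le> ?b i - ?b k \<and> ?b i - ?b k \<le> int p - 4"
    using gap[OF s(1) s(2) assms(6)] gap[OF s(2) s(3) assms(7)]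
      gap[OF s(1) s(3) less_trans[OF assms(7) assms(6)]] less_3_iff
    by auto
qed (use assms in auto)

end
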